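(* Let $N_\nu=2^{n_\nu}$ with $n_\nu\ge1$, let $\mathbf{g}=(g_0,\ldots,g_m)$ with $g_0=1$, $m\ge 1$, and let $\mathbf{s}\in\mathrm{GF}(2)^m$. Let $\boldsymbol{\eta}$ be the output of $\mathrm{convTrans}(\mathbf{0},\mathbf{g},\mathbf{s})$ and $\boldsymbol{\eta}_c=\boldsymbol{\eta}\mathbf{F}^{\otimes n_\nu}$. Then $$\{\mathbf{u}(\mathbf{v})\mathbf{F}^{\otimes n_\nu} : \mathbf{v}\in\mathrm{GF}(2)^{N_\nu},\ v_0=0\}=\{\mathbf{c}+\boldsymbol{\eta}_c : \mathbf{c}\in\mathrm{GF}(2)^{N_\nu},\ \textstyle\sum_{j=0}^{N_\nu-1}c_j=0\},$$ where $\mathbf{u}(\mathbf{v})$ is the output of $\mathrm{convTrans}(\mathbf{v},\mathbf{g},\mathbf{s})$; i.e., the set of possible node outputs is a coset of the single parity check code shifted by $\boldsymbol{\eta}_c$.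
   Context: All arithmetic is over $\mathrm{GF}(2)$. $\mathbf{F}=\begin{bmatrix}1&0\\1&1\end{bmatrix}$ and $\mathbf{F}^{\otimes n}$ is its $n$-fold Kronecker power. The function $\mathrm{convTrans}(\mathbf{v},\mathbf{g},\mathbf{s})$ processes $v_0,\ldots,v_{N-1}$ in order starting from state $\mathbf{s}=(s_0,\ldots,s_{m-1})$: for input bit $v$ and current state $\mathbf{s}$ it outputs $u=g_0v+\sum_{i=1}^m g_i s_{i-1}$ and moves to the state $(v,s_0,\ldots,s_{m-2})$; it returns $\mathbf{u}=(u_0,\ldots,u_{N-1})$ and the final state. *)

theory Defs
  imports Main "HOL-Library.Z2"
begin

text \<open>GF(2) is the field type bit. Vectors are lists of bits; matrices are
  functions nat \<Rightarrow> nat \<Rightarrow> bit (row index, column index), used with explicit sizes.\<close>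

definition F_mat :: "nat \<Rightarrow> nat \<Rightarrow> bit" where
  "F_mat i j = (if i < 2 \<and> j < 2 \<and> j \<le> i then 1 else 0)"

definition kron :: "(nat \<Rightarrow> nat \<Rightarrow> bit) \<Rightarrow> nat \<Rightarrow> (nat \<Rightarrow> nat \<Rightarrow> bit) \<Rightarrow> nat \<Rightarrow> nat \<Rightarrow> bit" where
  "kron A d B i j = A (i div d) (j div d) * B (i mod d) (j mod d)"

fun kron_pow :: "nat \<Rightarrow> nat \<Rightarrow> nat \<Rightarrow> bit" where
  "kron_pow 0 = (\<lambda>i j. if i = 0 \<and> j = 0 then 1 else 0)"
| "kron_pow (Suc n) = kron F_mat (2^n) (kron_pow n)"

definition vecmat :: "nat \<Rightarrow> bit list \<Rightarrow> (nat \<Rightarrow> nat \<Rightarrow> bit) \<Rightarrow> bit list" where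
  "vecmat N v M = map (\<lambda>j. \<Sum>i<N. v ! i * M i j) [0..<N]"

text \<open>convTrans v g s: g = (g_0,...,g_m), s = (s_0,...,s_{m-1}); returns (u, final state).\<close>
fun convTrans :: "bit list \<Rightarrow> bit list \<Rightarrow> bit list \<Rightarrow> bit list \<times> bit list" where
  "convTrans [] g s = ([], s)"
| "convTrans (v # vs) g s =
     (let m = length g - 1;
          u = g ! 0 * v + (\<Sum>i\<in>{1..m}. g ! i * s ! (i - 1));
          r = convTrans vs g (take m (v # s))
      in (u # fst r, snd r))"

end

theory Submission
  imports Defs
begin

text \<open>With zero initial state the encoder is a linear map v \<mapsto> L v whose matrix is lower
  unitriangular (because g_0 = 1); a general initial state only adds the fixed word \<eta>.
  The matrix of F^{\<otimes>n} is lower unitriangular as well, and all its rows sum to 0 except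
  row 0, which sums to 1. Hence v \<mapsto> L v F^{\<otimes>n} is a bijection of GF(2)^N under which
  the coordinate sum of the image equals v_0, so it maps the hyperplane v_0 = 0 onto the
  single parity check code.\<close>

(* Keep ring arithmetic on bit: these simp rules would turn + and * into XOR and AND. *)
declare add_bit_eq_xor [simp del] mult_bit_eq_and [simp del]

lemma bit_add_self: "(x::bit) + x = 0"
  by (metis diff_self minus_bit_def)

lemma bit_add_eq_0_iff: "(x::bit) + y = 0 \<longleftrightarrow> x = y"
  by (metis add.assoc add_0 bit_add_self)

lemma map2_add_replicate_0_left: "length ys = k \<Longrightarrow> map2 (+) (replicate k (0::bit)) ys = ys"
  by (induction ys arbitrary: k) auto

lemma map2_add_replicate_0_right: "map2 (+) xs (replicate (length xs) (0::bit)) = xs"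
  by (induction xs) auto

lemma map2_add_self: "map2 (+) xs xs = replicate (length xs) (0::bit)"
  by (induction xs) (auto simp: bit_add_self)

lemma map2_add_eq_replicate_0_iff:
  "length a = length b \<Longrightarrow> map2 (+) a b = replicate (length a) (0::bit) \<longleftrightarrow> a = b"
proof (induction a arbitrary: b)
  case (Cons x a)
  then show ?case by (cases b) (auto simp: bit_add_eq_0_iff)
qed simp

lemma finite_bit_lists_length_eq: "finite {xs::bit list. length xs = N}"
proof -
  have UNIV_eq: "(UNIV::bit set) = {0, 1}"
    using bit_not_zero_iff by blast
  have "finite (UNIV::bit set)"
    by (simp add: UNIV_eq)
  then show ?thesis
    using finite_lists_length_eq[of "UNIV::bit set" N] by simp
qed

lemma additive_bit_lists_image_eq:
  fixes f :: "bit list \<Rightarrow> bit list"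
  assumes len: "\<And>w. length w = N \<Longrightarrow> length (f w) = N"
    and add: "\<And>a b. length a = N \<Longrightarrow> length b = N \<Longrightarrow> f (map2 (+) a b) = map2 (+) (f a) (f b)"
    and ker: "\<And>w. length w = N \<Longrightarrow> f w = replicate N 0 \<Longrightarrow> w = replicate N 0"
  shows "f ` {w. length w = N} = {w. length w = N}"
proof (rule endo_inj_surj[OF finite_bit_lists_length_eq])
  show "f ` {w. length w = N} \<subseteq> {w. length w = N}"
    using len by auto
  show "inj_on f {w. length w = N}"
  proof (rule inj_onI)
    fix a b assume "a \<in> {w. length w = N}" "b \<in> {w. length w = N}" and "f a = f b"
    then have "length a = N" "length b = N" "f a = f b"
      by simp_all
    then have "f (map2 (+) a b) = map2 (+) (f a) (f a)"
      using add by simp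
    also have "\<dots> = replicate N 0"
      using map2_add_self len \<open>length a = N\<close> by simp
    finally have "f (map2 (+) a b) = replicate N 0" .
    then have "map2 (+) a b = replicate N 0"
      using ker[of "map2 (+) a b"] \<open>length a = N\<close> \<open>length b = N\<close> by simp
    then show "a = b"
      using \<open>length a = N\<close> \<open>length b = N\<close> map2_add_eq_replicate_0_iff[of a b] by simp
  qed
qed

lemma length_convTrans [simp]: "length (fst (convTrans v g s)) = length v"
  by (induction v arbitrary: s) (auto simp: Let_def)

lemma convTrans_add:
  assumes "length g = m + 1" "length s1 = m" "length s2 = m" "length v1 = length v2"
  shows "fst (convTrans (map2 (+) v1 v2) g (map2 (+) s1 s2))
       = map2 (+) (fst (convTrans v1 g s1)) (fst (convTrans v2 g s2))"
  using assms(2-)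
proof (induction v1 arbitrary: v2 s1 s2)
  case Nil
  then show ?case by simp
next
  case (Cons a v1)
  then obtain b v2' where v2: "v2 = b # v2'"
    by (cases v2) auto
  have next_state: "take m ((a + b) # map2 (+) s1 s2) = map2 (+) (take m (a # s1)) (take m (b # s2))"
    by (metis (no_types) list.map(2) take_map take_zip zip_Cons_Cons case_prod_conv)
  have output_sum: "(\<Sum>i\<in>{1..m}. g ! i * map2 (+) s1 s2 ! (i - 1))
      = (\<Sum>i\<in>{1..m}. g ! i * s1 ! (i - 1)) + (\<Sum>i\<in>{1..m}. g ! i * s2 ! (i - 1))"
    using Cons.prems by (auto simp: sum.distrib[symmetric] distrib_left intro!: sum.cong)
  have "fst (convTrans (map2 (+) v1 v2') g (take m ((a + b) # map2 (+) s1 s2)))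
      = map2 (+) (fst (convTrans v1 g (take m (a # s1)))) (fst (convTrans v2' g (take m (b # s2))))"
    unfolding next_state using Cons v2 by (intro Cons.IH) auto
  then show ?case
    using output_sum assms(1) v2 by (simp add: Let_def algebra_simps)
qed

lemma convTrans_affine:
  assumes "length g = m + 1" "length s = m"
  shows "fst (convTrans v g s)
       = map2 (+) (fst (convTrans v g (replicate m 0))) (fst (convTrans (replicate (length v) 0) g s))"
  using convTrans_add[OF assms(1), of "replicate m 0" s v "replicate (length v) 0"] assms(2)
  by (simp add: map2_add_replicate_0_left map2_add_replicate_0_right)

(* Stated with Suc 0, the simp normal form of the feedback sum in convTrans. *)
lemma sum_mult_replicate_0 [simp]:
  "(\<Sum>i\<in>{Suc 0..m}. g ! i * replicate m (0::bit) ! (i - Suc 0)) = 0"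
  by (intro sum.neutral) auto

lemma convTrans_zero_state_nth_0:
  assumes "length g = m + 1" "g ! 0 = 1" "v \<noteq> []"
  shows "fst (convTrans v g (replicate m 0)) ! 0 = v ! 0"
  using assms by (cases v) (auto simp: Let_def)

lemma convTrans_zero_state_kernel:
  assumes "length g = m + 1" "g ! 0 = 1"
  shows "fst (convTrans v g (replicate m 0)) = replicate (length v) 0 \<Longrightarrow> v = replicate (length v) 0"
proof (induction v)
  case Nil
  then show ?case by simp
next
  case (Cons a v)
  have "a = 0"
    using Cons.prems assms by (auto simp: Let_def)
  moreover have "take m (0 # replicate m (0::bit)) = replicate m 0"
    by (simp flip: replicate_Suc)
  ultimately show ?case
    using Cons assms(1) by (auto simp: Let_def)
qed

lemma convTrans_zero_state_image:
  assumes "length g = m + 1" "g ! 0 = 1"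
  shows "(\<lambda>v. fst (convTrans v g (replicate m 0))) ` {v. length v = N} = {v. length v = N}"
proof (rule additive_bit_lists_image_eq)
  fix a b :: "bit list" assume "length a = N" "length b = N"
  then show "fst (convTrans (map2 (+) a b) g (replicate m 0))
      = map2 (+) (fst (convTrans a g (replicate m 0))) (fst (convTrans b g (replicate m 0)))"
    using convTrans_add[OF assms(1), of "replicate m 0" "replicate m 0" a b]
    by (simp add: map2_add_replicate_0_left)
qed (use convTrans_zero_state_kernel[OF assms] in auto)

lemma length_vecmat [simp]: "length (vecmat N v M) = N"
  by (simp add: vecmat_def)

lemma nth_vecmat: "j < N \<Longrightarrow> vecmat N v M ! j = (\<Sum>i<N. v ! i * M i j)"
  by (simp add: vecmat_def)

lemma vecmat_add:
  "length a = N \<Longrightarrow> length b = N \<Longrightarrow> vecmat N (map2 (+) a b) M = map2 (+) (vecmat N a M) (vecmat N b M)"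
  by (intro nth_equalityI) (auto simp: nth_vecmat distrib_right sum.distrib)

lemma sum_vecmat: "(\<Sum>j<N. vecmat N w M ! j) = (\<Sum>i<N. w ! i * (\<Sum>j<N. M i j))"
proof -
  have "(\<Sum>j<N. vecmat N w M ! j) = (\<Sum>j<N. \<Sum>i<N. w ! i * M i j)"
    by (simp add: nth_vecmat)
  also have "\<dots> = (\<Sum>i<N. w ! i * (\<Sum>j<N. M i j))"
    by (subst sum.swap) (simp add: sum_distrib_left)
  finally show ?thesis .
qed

text \<open>The largest index k with w_k \<noteq> 0 survives in coordinate k of w M.\<close>
lemma vecmat_unitriangular_kernel:
  assumes lower: "\<And>i j. M i j \<noteq> 0 \<Longrightarrow> j \<le> i" and diag: "\<And>i. i < N \<Longrightarrow> M i i = 1"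
    and "length w = N" and "vecmat N w M = replicate N 0"
  shows "w = replicate N 0"
proof (rule ccontr)
  let ?S = "{i. i < N \<and> w ! i \<noteq> 0}"
  assume "w \<noteq> replicate N 0"
  then have "?S \<noteq> {}"
    using \<open>length w = N\<close> by (auto intro: nth_equalityI)
  moreover have fin: "finite ?S" by simp
  ultimately have k: "Max ?S < N" "w ! Max ?S \<noteq> 0"
    using Max_in by blast+
  have "w ! i * M i (Max ?S) = (if i = Max ?S then w ! Max ?S else 0)" if "i < N" for i
  proof -
    have "M i (Max ?S) = 0" if "i < Max ?S"
      using lower[of i "Max ?S"] that by (meson not_le)
    moreover have "w ! i = 0" if "Max ?S < i"
      using Max_ge[OF fin, of i] \<open>i < N\<close> that by fastforce
    ultimately show ?thesis
      using diag k(1) by (cases i "Max ?S" rule: linorder_cases) auto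
  qed
  then have "vecmat N w M ! Max ?S = w ! Max ?S"
    using k(1) by (simp add: nth_vecmat)
  then show False
    using assms(4) k by simp
qed

lemma vecmat_unitriangular_image:
  assumes "\<And>i j. M i j \<noteq> 0 \<Longrightarrow> j \<le> i" "\<And>i. i < N \<Longrightarrow> M i i = 1"
  shows "(\<lambda>w. vecmat N w M) ` {w. length w = N} = {w. length w = N}"
proof (rule additive_bit_lists_image_eq)
  show "\<And>w. length w = N \<Longrightarrow> vecmat N w M = replicate N 0 \<Longrightarrow> w = replicate N 0"
    using vecmat_unitriangular_kernel[OF assms] .
qed (simp_all add: vecmat_add)

lemma kron_pow_nonzero: "kron_pow n i j \<noteq> 0 \<Longrightarrow> j \<le> i \<and> i < 2 ^ n"
proof (induction n arbitrary: i j)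
  case 0
  then show ?case by (auto split: if_splits)
next
  case (Suc n)
  let ?d = "(2::nat) ^ n"
  have "F_mat (i div ?d) (j div ?d) \<noteq> 0" and "kron_pow n (i mod ?d) (j mod ?d) \<noteq> 0"
    using Suc.prems by (auto simp: kron_def)
  then have "i div ?d < 2" "j div ?d \<le> i div ?d" "j mod ?d \<le> i mod ?d"
    using Suc.IH by (auto simp: F_mat_def split: if_splits)
  moreover have "?d * (j div ?d) + j mod ?d \<le> ?d * (i div ?d) + i mod ?d"
    using calculation(2,3) by (intro add_le_mono mult_le_mono2)
  ultimately show ?case
    by (simp add: div_less_iff_less_mult mult.commute)
qed

lemma kron_pow_diag: "i < 2 ^ n \<Longrightarrow> kron_pow n i i = 1"
proof (induction n arbitrary: i)
  case 0
  then show ?case by simp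
next
  case (Suc n)
  then have "i div 2 ^ n < 2"
    by (simp add: less_mult_imp_div_less mult.commute)
  then show ?case
    using Suc.IH[of "i mod 2 ^ n"] by (simp add: kron_def F_mat_def)
qed

lemma sum_lessThan_double:
  fixes f :: "nat \<Rightarrow> 'a::comm_monoid_add"
  shows "(\<Sum>j<2 * d. f j) = (\<Sum>j<d. f j) + (\<Sum>j<d. f (j + d))"
proof -
  have "(\<Sum>j<2 * d. f j) = sum f {0..<d} + sum f {d..<d + d}"
    by (simp add: atLeast0LessThan[symmetric] mult_2 sum.atLeastLessThan_concat)
  also have "sum f {d..<d + d} = (\<Sum>j<d. f (j + d))"
    using sum.shift_bounds_nat_ivl[of f 0 d d] by (simp add: atLeast0LessThan)
  finally show ?thesis
    by (simp add: atLeast0LessThan)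
qed

lemma kron_pow_row_sum: "i < 2 ^ n \<Longrightarrow> (\<Sum>j<2 ^ n. kron_pow n i j) = (if i = 0 then 1 else 0)"
proof (induction n arbitrary: i)
  case 0
  then show ?case by simp
next
  case (Suc n)
  let ?d = "(2::nat) ^ n"
  have shift: "(j + ?d) div ?d = 1" "(j + ?d) mod ?d = j" if "j < ?d" for j
    using that by (simp_all add: div_add_self2)
  have "(\<Sum>j<2 ^ Suc n. kron_pow (Suc n) i j)
      = (\<Sum>j<?d. F_mat (i div ?d) 0 * kron_pow n (i mod ?d) j)
        + (\<Sum>j<?d. F_mat (i div ?d) 1 * kron_pow n (i mod ?d) j)"
    by (simp add: sum_lessThan_double kron_def shift)
  also have "\<dots> = (F_mat (i div ?d) 0 + F_mat (i div ?d) 1) * (\<Sum>j<?d. kron_pow n (i mod ?d) j)"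
    by (simp add: sum_distrib_left[symmetric] distrib_right)
  also have "\<dots> = (if i = 0 then 1 else 0)"
  proof (cases "i div ?d = 0")
    case True
    then have "i < ?d"
      by (simp add: div_eq_0_iff)
    then show ?thesis
      using True Suc.IH[of i] by (simp add: F_mat_def)
  next
    case False
    moreover have "i div ?d < 2"
      using Suc.prems by (simp add: less_mult_imp_div_less mult.commute)
    ultimately have "i div ?d = 1" "i \<noteq> 0"
      by (auto intro: Nat.gr0I)
    then show ?thesis
      by (simp add: F_mat_def bit_add_self)
  qed
  finally show ?case .
qed

lemma sum_vecmat_kron_pow:
  "(\<Sum>j<2 ^ n. vecmat (2 ^ n) w (kron_pow n) ! j) = w ! 0"
proof -
  have "(\<Sum>j<2 ^ n. vecmat (2 ^ n) w (kron_pow n) ! j) = (\<Sum>i<(2::nat) ^ n. if i = 0 then w ! 0 else 0)"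
    unfolding sum_vecmat by (intro sum.cong) (simp_all add: kron_pow_row_sum)
  then show ?thesis
    by simp
qed

lemma convTrans_zero_state_kron_pow_image:
  assumes "length g = m + 1" "g ! 0 = 1"
  shows "(\<lambda>v. vecmat (2 ^ n) (fst (convTrans v g (replicate m 0))) (kron_pow n))
           ` {v. length v = 2 ^ n \<and> v ! 0 = 0}
       = {c. length c = 2 ^ n \<and> (\<Sum>j<2 ^ n. c ! j) = 0}"
    (is "?\<Phi> ` _ = _")
proof -
  let ?N = "(2::nat) ^ n"
  have "?\<Phi> ` {v. length v = ?N}
      = (\<lambda>w. vecmat ?N w (kron_pow n)) ` (\<lambda>v. fst (convTrans v g (replicate m 0))) ` {v. length v = ?N}"
    by (simp add: image_image)
  also have "\<dots> = (\<lambda>w. vecmat ?N w (kron_pow n)) ` {w. length w = ?N}"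
    by (simp add: convTrans_zero_state_image[OF assms])
  also have "\<dots> = {c. length c = ?N}"
    by (rule vecmat_unitriangular_image) (use kron_pow_nonzero kron_pow_diag in blast)+
  finally have surj: "?\<Phi> ` {v. length v = ?N} = {c. length c = ?N}" .
  have parity: "(\<Sum>j<?N. ?\<Phi> v ! j) = v ! 0" if "length v = ?N" for v
  proof -
    have "v \<noteq> []"
      using that by auto
    then show ?thesis
      using convTrans_zero_state_nth_0[OF assms] by (simp add: sum_vecmat_kron_pow)
  qed
  have "{c. length c = ?N \<and> (\<Sum>j<?N. c ! j) = 0} = {c \<in> ?\<Phi> ` {v. length v = ?N}. (\<Sum>j<?N. c ! j) = 0}"
    unfolding surj by blast
  also have "\<dots> = ?\<Phi> ` {v. length v = ?N \<and> v ! 0 = 0}"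
    using parity by auto
  finally show ?thesis
    by (rule sym)
qed

theorem mainTheorem4:
  fixes n m :: nat and g s :: "bit list"
  assumes "n \<ge> 1" and "m \<ge> 1"
    and "length g = m + 1" and "g ! 0 = 1"
    and "length s = m"
  shows "{vecmat (2^n) (fst (convTrans v g s)) (kron_pow n) | v. length v = 2^n \<and> v ! 0 = 0}
       = {map2 (+) c (vecmat (2^n) (fst (convTrans (replicate (2^n) 0) g s)) (kron_pow n))
          | c. length c = 2^n \<and> (\<Sum>j<2^n. c ! j) = 0}"
proof -
  let ?N = "(2::nat) ^ n"
  let ?\<eta>c = "vecmat ?N (fst (convTrans (replicate ?N 0) g s)) (kron_pow n)"
  let ?\<Phi> = "\<lambda>v. vecmat ?N (fst (convTrans v g (replicate m 0))) (kron_pow n)"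
  have affine: "vecmat ?N (fst (convTrans v g s)) (kron_pow n) = map2 (+) (?\<Phi> v) ?\<eta>c"
    if "length v = ?N" for v
    using convTrans_affine[OF assms(3,5), of v] that by (simp add: vecmat_add)
  have "{vecmat ?N (fst (convTrans v g s)) (kron_pow n) | v. length v = ?N \<and> v ! 0 = 0}
      = (\<lambda>v. vecmat ?N (fst (convTrans v g s)) (kron_pow n)) ` {v. length v = ?N \<and> v ! 0 = 0}"
    by blast
  also have "\<dots> = (\<lambda>c. map2 (+) c ?\<eta>c) ` ?\<Phi> ` {v. length v = ?N \<and> v ! 0 = 0}"
    unfolding image_image by (rule image_cong[OF refl], rule affine) simp
  also have "\<dots> = {map2 (+) c ?\<eta>c | c. length c = ?N \<and> (\<Sum>j<?N. c ! j) = 0}"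
    unfolding convTrans_zero_state_kron_pow_image[OF assms(3,4)] by blast
  finally show ?thesis .
qed

end
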